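(* Let $a_1\neq 0$, $0<\varepsilon<1$, $T=1+\varepsilon$. Then the sets $\mathcal{U}_T(y,x_0)$, $(y,x_0)\in M^2$, are pairwise disjoint, and $$\bigcup_{(y,x_0)\in M^2}\mathcal{U}_T(y,x_0)=\{u\in L^2(0,1+\varepsilon):\ u|_{[1,1+\varepsilon]}\in W^{1,2}(1,1+\varepsilon),\ u(1+\varepsilon)=0\}.$$
   Context: Consider the scalar retarded control equation $\dot x(t)=a_1x(t-1)+u(t)$, $t\ge0$, with control $u\in L^2_{loc}(0,\infty)$ and initial data $x(0)=y$, $x(t)=x_0(t)$ for $t\in[-1,0)$, where $(y,x_0)\in M^2=\mathbb{R}\times L^2(-1,0)$. For every such initial state and control there is a unique continuous solution $x(t)=x(t;y,x_0,u)$ on $[0,\infty)$ (absolutely continuous, satisfying the equation a.e.). For $T>1$, the set of admissible controls $\mathcal{U}_T(y,x_0)$ is the set of $u\in L^2(0,T)$ such that $x(t;y,x_0,u)=0$ for all $t\in[T-1,T]$. *)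

theory Defs
  imports "HOL-Analysis.Analysis"
begin

definition L2_on :: "real set \<Rightarrow> (real \<Rightarrow> real) \<Rightarrow> bool" where
  "L2_on S f \<longleftrightarrow> f \<in> borel_measurable (lebesgue_on S) \<and>
                  integrable (lebesgue_on S) (\<lambda>s. (f s)^2)"

definition abs_cont_on :: "real set \<Rightarrow> (real \<Rightarrow> real) \<Rightarrow> bool" where
  "abs_cont_on S f \<longleftrightarrow>
     (\<forall>e>0. \<exists>d>0. \<forall>(n::nat) (a::nat \<Rightarrow> real) b.
        (\<forall>i<n. a i \<le> b i \<and> {a i..b i} \<subseteq> S) \<and>
        disjoint_family_on (\<lambda>i. {a i<..<b i}) {..<n} \<and>
        (\<Sum>i<n. b i - a i) < d
        \<longrightarrow> (\<Sum>i<n. \<bar>f (b i) - f (a i)\<bar>) < e)"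

definition is_solution ::
  "real \<Rightarrow> real \<Rightarrow> real \<Rightarrow> (real \<Rightarrow> real) \<Rightarrow> (real \<Rightarrow> real) \<Rightarrow> (real \<Rightarrow> real) \<Rightarrow> bool" where
  "is_solution a1 T y x0 u x \<longleftrightarrow>
     x 0 = y \<and> (\<forall>t\<in>{-1..<0}. x t = x0 t) \<and>
     continuous_on {0..T} x \<and> abs_cont_on {0..T} x \<and>
     (AE t in lebesgue_on {0..T}. (x has_real_derivative (a1 * x (t - 1) + u t)) (at t within {0..T}))"

definition admissible ::
  "real \<Rightarrow> real \<Rightarrow> real \<Rightarrow> (real \<Rightarrow> real) \<Rightarrow> (real \<Rightarrow> real) set" where
  "admissible a1 T y x0 =
     {u. L2_on {0..T} u \<and>
         (\<exists>x. is_solution a1 T y x0 u x \<and> (\<forall>t\<in>{T-1..T}. x t = 0))}"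

text \<open>u restricted to [a,b] lies in W^{1,2}(a,b), with continuous (absolutely continuous)
  representative v: v agrees with u a.e. on [a,b], and v has a derivative a.e. in L^2(a,b).\<close>
definition W12_repr :: "real \<Rightarrow> real \<Rightarrow> (real \<Rightarrow> real) \<Rightarrow> (real \<Rightarrow> real) \<Rightarrow> bool" where
  "W12_repr a b u v \<longleftrightarrow>
     abs_cont_on {a..b} v \<and> (AE t in lebesgue_on {a..b}. u t = v t) \<and>
     (\<exists>w. L2_on {a..b} w \<and>
          (AE t in lebesgue_on {a..b}. (v has_real_derivative w t) (at t within {a..b})))"

end

theory Submission
  imports Defs
begin

text \<open>Since the state vanishes on [\<epsilon>, 1 + \<epsilon>], the equation there reduces to the feedback law
  u(t) = -a1 x(t - 1). Hence u is determined on [1, 1 + \<epsilon>] by the absolutely continuous state on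
  [0, \<epsilon>], with derivative -a1 (a1 x0(t - 2) + u(t - 1)) in L^2 and u(1 + \<epsilon>) = -a1 x(\<epsilon>) = 0;
  conversely such a u determines x on [0, \<epsilon>] and then, through the equation on (0, 1), an initial
  function x0 in L^2 steering the system to zero. Disjointness comes from the same relations read
  backwards: u fixes x a.e. on (\<epsilon> - 1, \<epsilon>), hence on [0, \<epsilon>] by continuity, and because a1 \<noteq> 0
  the equation on (0, \<epsilon>) then fixes x0 a.e. on (-1, \<epsilon> - 1).\<close>

lemma AE_lebesgue_on_iff_negligible:
  assumes "S \<in> sets lebesgue"
  shows "(AE t in lebesgue_on S. P t) \<longleftrightarrow> (\<exists>N. negligible N \<and> (\<forall>t\<in>S. t \<notin> N \<longrightarrow> P t))"
proof -
  have "(AE t in lebesgue_on S. P t) \<longleftrightarrow> (AE t in lebesgue. t \<in> S \<longrightarrow> P t)"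
    using assms by (simp add: AE_restrict_space_iff)
  also have "\<dots> \<longleftrightarrow> (\<exists>N. negligible N \<and> {t. \<not> (t \<in> S \<longrightarrow> P t)} \<subseteq> N)"
    by (rule eventually_ae_filter_negligible)
  finally show ?thesis by blast
qed

lemma AE_lebesgue_onI:
  assumes "S \<in> sets lebesgue" "negligible N" "\<And>t. t \<in> S \<Longrightarrow> t \<notin> N \<Longrightarrow> P t"
  shows "AE t in lebesgue_on S. P t"
  using assms by (auto simp: AE_lebesgue_on_iff_negligible)

lemma AE_lebesgue_onE:
  assumes "S \<in> sets lebesgue" "AE t in lebesgue_on S. P t"
  obtains N where "negligible N" "\<And>t. t \<in> S \<Longrightarrow> t \<notin> N \<Longrightarrow> P t"
  using assms that by (auto simp: AE_lebesgue_on_iff_negligible)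

lemma negligible_translated_preimage:
  fixes c :: real
  assumes "negligible N"
  shows "negligible {t. t + c \<in> N}"
proof -
  have "{t. t + c \<in> N} = (+) (-c) ` N"
    by (force simp: image_iff algebra_simps)
  then show ?thesis
    using negligible_translation[OF assms, of "-c"] by simp
qed

lemma L2_on_iff_indicator:
  assumes "S \<in> sets lebesgue"
  shows "L2_on S f \<longleftrightarrow> (\<lambda>s. indicator S s * f s) \<in> borel_measurable lebesgue
                        \<and> integrable lebesgue (\<lambda>s. (indicator S s * f s)^2)"
proof -
  have sq: "(\<lambda>s. (indicator S s * f s)^2) = (\<lambda>s. indicator S s *\<^sub>R (f s)^2)"
    by (auto simp: fun_eq_iff indicator_def)
  have "f \<in> borel_measurable (lebesgue_on S) \<longleftrightarrow>
        (\<lambda>s. indicator S s *\<^sub>R f s) \<in> borel_measurable lebesgue"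
    by (rule borel_measurable_restrict_space_iff) (use assms in simp)
  moreover have "integrable (lebesgue_on S) (\<lambda>s. (f s)^2) \<longleftrightarrow>
                 integrable lebesgue (\<lambda>s. indicator S s *\<^sub>R (f s)^2)"
    by (rule integrable_restrict_space) (use assms in simp)
  ultimately show ?thesis unfolding L2_on_def sq by simp
qed

lemma L2_on_shift:
  assumes "L2_on {a..b} f"
  shows "L2_on {a-h..b-h} (\<lambda>t. f (t + h))"
proof -
  define g where "g = (\<lambda>s. indicator {a..b} s * f s)"
  have shifted: "indicator {a-h..b-h} t * f (t + h) = g (h + 1 * t)" for t
    by (auto simp: g_def indicator_def add.commute)
  from assms have meas: "g \<in> borel_measurable lebesgue"
    and int: "integrable lebesgue (\<lambda>s. (g s)^2)"
    by (auto simp: L2_on_iff_indicator g_def)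
  have "(\<lambda>t. g (h + 1 *\<^sub>R t)) \<in> borel_measurable lebesgue"
    by (rule borel_measurable_affine[OF meas]) simp
  moreover have "integrable lebesgue (\<lambda>t. (g (h + 1 * t))^2)"
    using lebesgue_integrable_real_affine[OF int, of 1 h] by simp
  ultimately show ?thesis by (simp add: L2_on_iff_indicator shifted)
qed

lemma L2_on_subset:
  assumes "L2_on S f" "T \<subseteq> S" "S \<in> sets lebesgue" "T \<in> sets lebesgue"
  shows "L2_on T f"
proof -
  have restrict: "indicator T s * f s = indicator T s * (indicator S s * f s)" for s
    using assms(2) by (auto simp: indicator_def)
  from assms(1,3) have "(\<lambda>s. indicator S s * f s) \<in> borel_measurable lebesgue"
    and int: "integrable lebesgue (\<lambda>s. (indicator S s * f s)^2)"
    by (auto simp: L2_on_iff_indicator)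
  then have "(\<lambda>s. indicator T s * (indicator S s * f s)) \<in> borel_measurable lebesgue"
    and "integrable lebesgue (\<lambda>s. indicator T s *\<^sub>R (indicator S s * f s)^2)"
    using integrable_mult_indicator[OF assms(4) int] assms(4) by auto
  moreover have "(indicator T s * (indicator S s * f s))^2 = indicator T s * (indicator S s * f s)^2" for s
    by (simp add: indicator_def)
  ultimately show ?thesis
    using assms(4) by (simp add: L2_on_iff_indicator restrict)
qed

lemma L2_on_cmult:
  assumes "L2_on S f"
  shows "L2_on S (\<lambda>s. c * f s)"
  using assms unfolding L2_on_def
  by (auto simp: power_mult_distrib intro: integrable_mult_right)

lemma L2_on_add:
  assumes "L2_on S f" "L2_on S g"
  shows "L2_on S (\<lambda>s. f s + g s)"
proof -
  have dominant: "integrable (lebesgue_on S) (\<lambda>s. 2 * (f s)^2 + 2 * (g s)^2)"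
    using assms unfolding L2_on_def by (intro Bochner_Integration.integrable_add integrable_mult_right) blast+
  have meas: "(\<lambda>s. f s + g s) \<in> borel_measurable (lebesgue_on S)"
    using assms unfolding L2_on_def by (intro borel_measurable_add) blast+
  have "(f s + g s)^2 \<le> 2 * (f s)^2 + 2 * (g s)^2" for s
    using sum_squares_ge_zero[of "f s - g s" 0] by (simp add: power2_eq_square algebra_simps)
  then have "integrable (lebesgue_on S) (\<lambda>s. (f s + g s)^2)"
    by (intro Bochner_Integration.integrable_bound[OF dominant]) (use meas in auto)
  then show ?thesis using meas unfolding L2_on_def by blast
qed

definition abs_cont_modulus :: "real set \<Rightarrow> (real \<Rightarrow> real) \<Rightarrow> real \<Rightarrow> real \<Rightarrow> bool" where
  "abs_cont_modulus S f e d \<longleftrightarrow> (\<forall>(n::nat) (a::nat \<Rightarrow> real) b.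
        (\<forall>i<n. a i \<le> b i \<and> {a i..b i} \<subseteq> S) \<and>
        disjoint_family_on (\<lambda>i. {a i<..<b i}) {..<n} \<and>
        (\<Sum>i<n. b i - a i) < d
        \<longrightarrow> (\<Sum>i<n. \<bar>f (b i) - f (a i)\<bar>) < e)"

lemma abs_cont_on_iff_modulus: "abs_cont_on S f \<longleftrightarrow> (\<forall>e>0. \<exists>d>0. abs_cont_modulus S f e d)"
  unfolding abs_cont_on_def abs_cont_modulus_def ..

lemma abs_cont_modulusD:
  fixes a b :: "nat \<Rightarrow> real"
  assumes "abs_cont_modulus S f e d" "\<And>i. i < n \<Longrightarrow> a i \<le> b i \<and> {a i..b i} \<subseteq> S"
    "disjoint_family_on (\<lambda>i. {a i<..<b i}) {..<n}" "(\<Sum>i<n. b i - a i) < d"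
  shows "(\<Sum>i<n. \<bar>f (b i) - f (a i)\<bar>) < e"
  using assms unfolding abs_cont_modulus_def by blast

lemma abs_cont_modulusI:
  assumes "\<And>n (a::nat \<Rightarrow> real) b. (\<And>i. i < n \<Longrightarrow> a i \<le> b i \<and> {a i..b i} \<subseteq> S) \<Longrightarrow>
     disjoint_family_on (\<lambda>i. {a i<..<b i}) {..<n} \<Longrightarrow> (\<Sum>i<n. b i - a i) < d \<Longrightarrow>
     (\<Sum>i<n. \<bar>f (b i) - f (a i)\<bar>) < e"
  shows "abs_cont_modulus S f e d"
  using assms unfolding abs_cont_modulus_def by blast

lemma abs_cont_onE:
  assumes "abs_cont_on S f" "e > 0"
  obtains d where "d > 0" "abs_cont_modulus S f e d"
  using assms unfolding abs_cont_on_iff_modulus by blast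

lemma abs_cont_onI:
  assumes "\<And>e. e > 0 \<Longrightarrow> \<exists>d>0. abs_cont_modulus S f e d"
  shows "abs_cont_on S f"
  using assms unfolding abs_cont_on_iff_modulus by blast

lemma disjoint_family_on_mono_image_intervals:
  fixes \<phi> :: "real \<Rightarrow> real"
  assumes mono: "\<And>s t. s \<in> S \<Longrightarrow> t \<in> S \<Longrightarrow> s \<le> t \<Longrightarrow> \<phi> s \<le> \<phi> t"
    and ab: "\<And>i. i \<in> I \<Longrightarrow> a i \<le> b i \<and> a i \<in> S \<and> b i \<in> S"
    and disj: "disjoint_family_on (\<lambda>i. {a i<..<b i}) I"
  shows "disjoint_family_on (\<lambda>i. {\<phi> (a i)<..<\<phi> (b i)}) I"
  unfolding disjoint_family_on_def
proof (intro ballI impI)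
  fix i j assume i: "i \<in> I" and j: "j \<in> I" and "i \<noteq> j"
  then have dis: "{a i<..<b i} \<inter> {a j<..<b j} = {}"
    using disj unfolding disjoint_family_on_def by blast
  show "{\<phi> (a i)<..<\<phi> (b i)} \<inter> {\<phi> (a j)<..<\<phi> (b j)} = {}"
  proof (rule ccontr)
    assume "{\<phi> (a i)<..<\<phi> (b i)} \<inter> {\<phi> (a j)<..<\<phi> (b j)} \<noteq> {}"
    then obtain s where "s \<in> {\<phi> (a i)<..<\<phi> (b i)} \<inter> {\<phi> (a j)<..<\<phi> (b j)}" by blast
    then have s: "\<phi> (a i) < s" "s < \<phi> (b i)" "\<phi> (a j) < s" "s < \<phi> (b j)" by auto
    have "a i < b i" "a j < b j"
      using ab[OF i] ab[OF j] s by (auto simp: order_le_less)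
    have "b i \<le> a j \<or> b j \<le> a i"
    proof (rule ccontr)
      assume "\<not> (b i \<le> a j \<or> b j \<le> a i)"
      then have "(max (a i) (a j) + min (b i) (b j)) / 2 \<in> {a i<..<b i} \<inter> {a j<..<b j}"
        using \<open>a i < b i\<close> \<open>a j < b j\<close> by auto
      then show False using dis by blast
    qed
    moreover have "\<phi> (b i) \<le> \<phi> (a j)" if "b i \<le> a j"
      using mono ab[OF i] ab[OF j] that by blast
    moreover have "\<phi> (b j) \<le> \<phi> (a i)" if "b j \<le> a i"
      using mono ab[OF i] ab[OF j] that by blast
    ultimately show False using s by linarith
  qed
qed

lemma abs_cont_on_reparam:
  assumes f: "abs_cont_on {p'..q'} f"
    and img: "\<And>t. t \<in> {p..q} \<Longrightarrow> \<phi> t \<in> {p'..q'}"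
    and mon: "\<And>a b. p \<le> a \<Longrightarrow> a \<le> b \<Longrightarrow> b \<le> q \<Longrightarrow> \<phi> a \<le> \<phi> b \<and> \<phi> b - \<phi> a \<le> b - a"
  shows "abs_cont_on {p..q} (\<lambda>t. f (\<phi> t))"
proof (rule abs_cont_onI)
  fix e :: real assume "e > 0"
  then obtain d where "d > 0" and d: "abs_cont_modulus {p'..q'} f e d"
    by (rule abs_cont_onE[OF f])
  have "abs_cont_modulus {p..q} (\<lambda>t. f (\<phi> t)) e d"
  proof (rule abs_cont_modulusI)
    fix n and a b :: "nat \<Rightarrow> real"
    assume ab: "\<And>i. i < n \<Longrightarrow> a i \<le> b i \<and> {a i..b i} \<subseteq> {p..q}"
      and disj: "disjoint_family_on (\<lambda>i. {a i<..<b i}) {..<n}" and small: "(\<Sum>i<n. b i - a i) < d"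
    have ab': "p \<le> a i \<and> a i \<le> b i \<and> b i \<le> q" if "i < n" for i
      using ab[OF that] by auto
    have in_pq: "a i \<in> {p..q}" "b i \<in> {p..q}" if "i < n" for i
      using ab'[OF that] by auto
    have "\<phi> (a i) \<le> \<phi> (b i) \<and> {\<phi> (a i)..\<phi> (b i)} \<subseteq> {p'..q'}" if "i < n" for i
      using mon ab'[OF that] img[of "a i"] img[of "b i"] by auto
    moreover have "disjoint_family_on (\<lambda>i. {\<phi> (a i)<..<\<phi> (b i)}) {..<n}"
      by (rule disjoint_family_on_mono_image_intervals[OF _ _ disj, where S = "{p..q}"])
        (use mon ab' in_pq in auto)
    moreover have "(\<Sum>i<n. \<phi> (b i) - \<phi> (a i)) \<le> (\<Sum>i<n. b i - a i)"
      by (rule sum_mono) (use mon ab' in auto)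
    ultimately show "(\<Sum>i<n. \<bar>f (\<phi> (b i)) - f (\<phi> (a i))\<bar>) < e"
      using abs_cont_modulusD[OF d] small by fastforce
  qed
  with \<open>d > 0\<close> show "\<exists>d>0. abs_cont_modulus {p..q} (\<lambda>t. f (\<phi> t)) e d" by blast
qed

lemma abs_cont_on_cmult:
  assumes f: "abs_cont_on S f"
  shows "abs_cont_on S (\<lambda>t. c * f t)"
proof (cases "c = 0")
  case True
  then show ?thesis by (auto intro!: abs_cont_onI abs_cont_modulusI exI[of _ 1])
next
  case False
  show ?thesis
  proof (rule abs_cont_onI)
    fix e :: real assume "e > 0"
    then obtain d where "d > 0" and d: "abs_cont_modulus S f (e / \<bar>c\<bar>) d"
      using abs_cont_onE[OF f, of "e / \<bar>c\<bar>"] False by auto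
    have "abs_cont_modulus S (\<lambda>t. c * f t) e d"
    proof (rule abs_cont_modulusI)
      fix n and a b :: "nat \<Rightarrow> real"
      assume "\<And>i. i < n \<Longrightarrow> a i \<le> b i \<and> {a i..b i} \<subseteq> S"
        "disjoint_family_on (\<lambda>i. {a i<..<b i}) {..<n}" "(\<Sum>i<n. b i - a i) < d"
      then have "\<bar>c\<bar> * (\<Sum>i<n. \<bar>f (b i) - f (a i)\<bar>) < \<bar>c\<bar> * (e / \<bar>c\<bar>)"
        using False by (intro mult_strict_left_mono abs_cont_modulusD[OF d]) auto
      then show "(\<Sum>i<n. \<bar>c * f (b i) - c * f (a i)\<bar>) < e"
        using False by (simp add: sum_distrib_left abs_mult right_diff_distrib[symmetric])
    qed
    with \<open>d > 0\<close> show "\<exists>d>0. abs_cont_modulus S (\<lambda>t. c * f t) e d" by blast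
  qed
qed

lemma abs_cont_on_cong:
  assumes "abs_cont_on S f" and "\<And>t. t \<in> S \<Longrightarrow> f t = g t"
  shows "abs_cont_on S g"
proof -
  have "abs_cont_modulus S g e d" if "abs_cont_modulus S f e d" for e d
  proof (rule abs_cont_modulusI)
    fix n and a b :: "nat \<Rightarrow> real"
    assume ab: "\<And>i. i < n \<Longrightarrow> a i \<le> b i \<and> {a i..b i} \<subseteq> S"
      and "disjoint_family_on (\<lambda>i. {a i<..<b i}) {..<n}" "(\<Sum>i<n. b i - a i) < d"
    then have "(\<Sum>i<n. \<bar>f (b i) - f (a i)\<bar>) < e" by (rule abs_cont_modulusD[OF that])
    moreover have "f (a i) = g (a i) \<and> f (b i) = g (b i)" if "i < n" for i
      using ab[OF that] assms(2) by auto
    ultimately show "(\<Sum>i<n. \<bar>g (b i) - g (a i)\<bar>) < e" by simp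
  qed
  then show ?thesis using assms(1) unfolding abs_cont_on_iff_modulus by blast
qed

lemma abs_cont_on_imp_continuous_on:
  assumes f: "abs_cont_on {p..q} f"
  shows "continuous_on {p..q} f"
  unfolding continuous_on_iff
proof (intro ballI allI impI)
  fix x e :: real assume x: "x \<in> {p..q}" and "e > 0"
  then obtain d where "d > 0" and d: "abs_cont_modulus {p..q} f e d"
    using abs_cont_onE[OF f] by blast
  have "dist (f x') (f x) < e" if x': "x' \<in> {p..q}" and "dist x' x < d" for x'
  proof -
    let ?l = "min x x'" and ?r = "max x x'"
    have "(\<Sum>i<1::nat. \<bar>f ?r - f ?l\<bar>) < e"
      by (rule abs_cont_modulusD[OF d, where a = "\<lambda>_. ?l" and b = "\<lambda>_. ?r"])
        (use x x' \<open>dist x' x < d\<close> in \<open>auto simp: dist_real_def disjoint_family_on_def\<close>)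
    then show ?thesis
      by (cases "x \<le> x'") (simp_all add: dist_real_def abs_minus_commute max_def min_def)
  qed
  with \<open>d > 0\<close> show "\<exists>d>0. \<forall>x'\<in>{p..q}. dist x' x < d \<longrightarrow> dist (f x') (f x) < e" by blast
qed

lemma is_solutionD:
  assumes "is_solution a1 T y x0 u x"
  shows "x 0 = y" "\<And>t. t \<in> {-1..<0} \<Longrightarrow> x t = x0 t"
    "continuous_on {0..T} x" "abs_cont_on {0..T} x"
  using assms unfolding is_solution_def by blast+

lemma is_solution_DERIV:
  assumes "is_solution a1 T y x0 u x"
  obtains N where "negligible N"
    "\<And>t. 0 < t \<Longrightarrow> t < T \<Longrightarrow> t \<notin> N \<Longrightarrow> (x has_real_derivative a1 * x (t - 1) + u t) (at t)"
proof -
  have ae: "AE t in lebesgue_on {0..T}. (x has_real_derivative a1 * x (t - 1) + u t) (at t within {0..T})"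
    using assms unfolding is_solution_def by blast
  obtain N where "negligible N" and N:
    "\<And>t. t \<in> {0..T} \<Longrightarrow> t \<notin> N \<Longrightarrow> (x has_real_derivative a1 * x (t - 1) + u t) (at t within {0..T})"
    by (rule AE_lebesgue_onE[OF _ ae]) auto
  moreover have "at t within {0..T} = at t" if "0 < t" "t < T" for t
    by (rule at_within_interior) (use that in simp)
  ultimately show ?thesis
    using that[of N] by (metis atLeastAtMost_iff less_eq_real_def)
qed

lemma DERIV_vanishing_on_interval:
  assumes "\<And>s. s \<in> {p..q} \<Longrightarrow> x s = 0" "p < t" "t < q"
  shows "(x has_real_derivative 0) (at t)"
proof (rule has_field_derivative_transform_within_open[of "\<lambda>_. 0" 0 t "{p<..<q}"])
  show "((\<lambda>_. 0) has_real_derivative 0) (at t)" by simp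
qed (use assms in auto)

lemma continuous_on_interval_ae_eq:
  fixes f g :: "real \<Rightarrow> real"
  assumes "continuous_on {a..b} f" "continuous_on {a..b} g" "a < b"
    and "negligible M" and eq: "\<And>t. t \<in> {a..b} \<Longrightarrow> t \<notin> M \<Longrightarrow> f t = g t"
    and "t \<in> {a..b}"
  shows "f t = g t"
proof -
  have h: "continuous_on {a..b} (\<lambda>t. f t - g t)"
    using assms(1,2) by (rule continuous_on_diff)
  define U where "U = {a<..<b} \<inter> (\<lambda>t. f t - g t) -` (- {0})"
  have "open U"
    unfolding U_def by (rule continuous_open_preimage[OF continuous_on_subset[OF h]]) auto
  moreover have "negligible U"
    by (rule negligible_subset[OF \<open>negligible M\<close>]) (use eq in \<open>auto simp: U_def\<close>)
  ultimately have "U = {}" using open_not_negligible by blast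
  then have "{a<..<b} \<subseteq> {t \<in> {a..b}. f t - g t = 0}"
    unfolding U_def by auto
  moreover have "closed {t \<in> {a..b}. f t - g t = 0}"
    by (rule continuous_closed_preimage_constant[OF h]) simp
  ultimately have "closure {a<..<b} \<subseteq> {t \<in> {a..b}. f t - g t = 0}"
    by (rule closure_minimal)
  then show ?thesis using \<open>a < b\<close> \<open>t \<in> {a..b}\<close> by auto
qed

lemma feedback_law_on_final_interval:
  assumes "1 \<le> T" and sol: "is_solution a1 T y x0 u x" and zero: "\<forall>t\<in>{T-1..T}. x t = 0"
  obtains N where "negligible N"
    "\<And>t. T - 1 < t \<Longrightarrow> t < T \<Longrightarrow> t \<notin> N \<Longrightarrow> a1 * x (t - 1) + u t = 0"
proof -
  obtain N where "negligible N"
    and D: "\<And>t. 0 < t \<Longrightarrow> t < T \<Longrightarrow> t \<notin> N \<Longrightarrow> (x has_real_derivative a1 * x (t - 1) + u t) (at t)"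
    using is_solution_DERIV[OF sol] by blast
  moreover have "a1 * x (t - 1) + u t = 0" if "T - 1 < t" "t < T" "t \<notin> N" for t
  proof -
    have "(x has_real_derivative 0) (at t)"
      by (rule DERIV_vanishing_on_interval[of "T - 1" T]) (use zero that in auto)
    moreover have "(x has_real_derivative a1 * x (t - 1) + u t) (at t)"
      using D that \<open>1 \<le> T\<close> by simp
    ultimately show ?thesis by (rule DERIV_unique[symmetric])
  qed
  ultimately show ?thesis using that by blast
qed

lemma admissible_states_agree:
  assumes "a1 \<noteq> 0" "0 < \<epsilon>" "\<epsilon> < 1"
    and sol: "is_solution a1 (1 + \<epsilon>) y x0 u x" and zero: "\<forall>t\<in>{1 + \<epsilon> - 1..1 + \<epsilon>}. x t = 0"
    and sol': "is_solution a1 (1 + \<epsilon>) y' x0' u x'" and zero': "\<forall>t\<in>{1 + \<epsilon> - 1..1 + \<epsilon>}. x' t = 0"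
  obtains M where "negligible M" "\<And>s. \<epsilon> - 1 < s \<Longrightarrow> s < \<epsilon> \<Longrightarrow> s \<notin> M \<Longrightarrow> x s = x' s"
    "\<And>s. s \<in> {0..\<epsilon>} \<Longrightarrow> x s = x' s"
proof -
  have "1 \<le> 1 + \<epsilon>" using \<open>0 < \<epsilon>\<close> by simp
  obtain N where "negligible N" and N: "\<And>t. 1 + \<epsilon> - 1 < t \<Longrightarrow> t < 1 + \<epsilon> \<Longrightarrow> t \<notin> N \<Longrightarrow> a1 * x (t - 1) + u t = 0"
    using feedback_law_on_final_interval[OF \<open>1 \<le> 1 + \<epsilon>\<close> sol zero] by metis
  obtain N' where "negligible N'" and N': "\<And>t. 1 + \<epsilon> - 1 < t \<Longrightarrow> t < 1 + \<epsilon> \<Longrightarrow> t \<notin> N' \<Longrightarrow> a1 * x' (t - 1) + u t = 0"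
    using feedback_law_on_final_interval[OF \<open>1 \<le> 1 + \<epsilon>\<close> sol' zero'] by metis
  define M where "M = {s. s + 1 \<in> N} \<union> {s. s + 1 \<in> N'}"
  have "negligible M"
    unfolding M_def using \<open>negligible N\<close> \<open>negligible N'\<close> by (intro negligible_Un negligible_translated_preimage)
  have agree: "x s = x' s" if "\<epsilon> - 1 < s" "s < \<epsilon>" "s \<notin> M" for s
  proof -
    have "a1 * x s + u (s + 1) = 0" "a1 * x' s + u (s + 1) = 0"
      using N[of "s + 1"] N'[of "s + 1"] that by (simp_all add: M_def)
    then have "a1 * x s = a1 * x' s" by linarith
    then show ?thesis using \<open>a1 \<noteq> 0\<close> by simp
  qed
  have "{0..\<epsilon>} \<subseteq> {0..1 + \<epsilon>}" by simp
  then have "continuous_on {0..\<epsilon>} x" "continuous_on {0..\<epsilon>} x'"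
    using is_solutionD(3)[OF sol] is_solutionD(3)[OF sol'] by (metis continuous_on_subset)+
  moreover have "negligible (M \<union> {\<epsilon>})" using \<open>negligible M\<close> by simp
  ultimately have "x s = x' s" if "s \<in> {0..\<epsilon>}" for s
    by (rule continuous_on_interval_ae_eq[OF _ _ \<open>0 < \<epsilon>\<close> _ _ that])
      (use agree \<open>\<epsilon> < 1\<close> in auto)
  with \<open>negligible M\<close> agree show ?thesis using that by blast
qed

text \<open>Equal states on [0, c] have equal derivatives on (0, c), from which the equation recovers
  the delayed values because a1 \<noteq> 0.\<close>
lemma solutions_agree_before:
  assumes "a1 \<noteq> 0" "c \<le> T"
    and sol: "is_solution a1 T y x0 u x" and sol': "is_solution a1 T y' x0' u x'"
    and agree: "\<And>s. s \<in> {0..c} \<Longrightarrow> x s = x' s"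
  obtains M where "negligible M" "\<And>s. -1 < s \<Longrightarrow> s < c - 1 \<Longrightarrow> s \<notin> M \<Longrightarrow> x s = x' s"
proof -
  obtain N where "negligible N"
    and D: "\<And>t. 0 < t \<Longrightarrow> t < T \<Longrightarrow> t \<notin> N \<Longrightarrow> (x has_real_derivative a1 * x (t - 1) + u t) (at t)"
    using is_solution_DERIV[OF sol] by blast
  obtain N' where "negligible N'"
    and D': "\<And>t. 0 < t \<Longrightarrow> t < T \<Longrightarrow> t \<notin> N' \<Longrightarrow> (x' has_real_derivative a1 * x' (t - 1) + u t) (at t)"
    using is_solution_DERIV[OF sol'] by blast
  have "x s = x' s" if s: "-1 < s" "s < c - 1" "s + 1 \<notin> N" "s + 1 \<notin> N'" for s
  proof -
    have "(x has_real_derivative a1 * x s + u (s + 1)) (at (s + 1))"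
      using D[of "s + 1"] s \<open>c \<le> T\<close> by simp
    then have "(x' has_real_derivative a1 * x s + u (s + 1)) (at (s + 1))"
      by (rule has_field_derivative_transform_within_open[of _ _ _ "{0<..<c}"])
        (use s agree in auto)
    moreover have "(x' has_real_derivative a1 * x' s + u (s + 1)) (at (s + 1))"
      using D'[of "s + 1"] s \<open>c \<le> T\<close> by simp
    ultimately have "a1 * x s + u (s + 1) = a1 * x' s + u (s + 1)"
      by (rule DERIV_unique)
    then show ?thesis using \<open>a1 \<noteq> 0\<close> by simp
  qed
  moreover have "negligible ({s. s + 1 \<in> N} \<union> {s. s + 1 \<in> N'})"
    using \<open>negligible N\<close> \<open>negligible N'\<close> by (intro negligible_Un negligible_translated_preimage)
  ultimately show ?thesis using that by blast
qed

lemma admissible_initial_data_unique: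
  assumes "a1 \<noteq> 0" "0 < \<epsilon>" "\<epsilon> < 1"
    and "u \<in> admissible a1 (1 + \<epsilon>) y x0" "u \<in> admissible a1 (1 + \<epsilon>) y' x0'"
  shows "y = y' \<and> (AE s in lebesgue_on {-1..0}. x0 s = x0' s)"
proof -
  obtain x where sol: "is_solution a1 (1 + \<epsilon>) y x0 u x" and zero: "\<forall>t\<in>{1 + \<epsilon> - 1..1 + \<epsilon>}. x t = 0"
    using assms(4) unfolding admissible_def by blast
  obtain x' where sol': "is_solution a1 (1 + \<epsilon>) y' x0' u x'" and zero': "\<forall>t\<in>{1 + \<epsilon> - 1..1 + \<epsilon>}. x' t = 0"
    using assms(5) unfolding admissible_def by blast
  obtain M where "negligible M" and late: "\<And>s. \<epsilon> - 1 < s \<Longrightarrow> s < \<epsilon> \<Longrightarrow> s \<notin> M \<Longrightarrow> x s = x' s"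
    and agree: "\<And>s. s \<in> {0..\<epsilon>} \<Longrightarrow> x s = x' s"
    using admissible_states_agree[OF assms(1-3) sol zero sol' zero'] by blast
  obtain M' where "negligible M'" and early: "\<And>s. -1 < s \<Longrightarrow> s < \<epsilon> - 1 \<Longrightarrow> s \<notin> M' \<Longrightarrow> x s = x' s"
    using solutions_agree_before[where c = \<epsilon>, OF \<open>a1 \<noteq> 0\<close> _ sol sol' agree] \<open>0 < \<epsilon>\<close> by auto
  have "y = y'"
    using is_solutionD(1)[OF sol] is_solutionD(1)[OF sol'] agree[of 0] \<open>0 < \<epsilon>\<close> by simp
  moreover have "AE s in lebesgue_on {-1..0}. x0 s = x0' s"
  proof (rule AE_lebesgue_onI[where N = "M \<union> M' \<union> {-1, \<epsilon> - 1, 0}"])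
    fix s assume s: "s \<in> {-1..0}" "s \<notin> M \<union> M' \<union> {-1, \<epsilon> - 1, 0}"
    then have "x s = x' s"
      using late[of s] early[of s] \<open>0 < \<epsilon>\<close> by (cases "s < \<epsilon> - 1") auto
    then show "x0 s = x0' s"
      using is_solutionD(2)[OF sol, of s] is_solutionD(2)[OF sol', of s] s by auto
  qed (use \<open>negligible M\<close> \<open>negligible M'\<close> in auto)
  ultimately show ?thesis by blast
qed

lemma delayed_state_W12:
  assumes "T \<le> 2" "L2_on {-1..0} x0" "L2_on {0..T} u" and sol: "is_solution a1 T y x0 u x"
  shows "abs_cont_on {1..T} (\<lambda>t. x (t - 1))"
    and "L2_on {1..T} (\<lambda>t. a1 * x0 (t - 2) + u (t - 1))"
    and "AE t in lebesgue_on {1..T}.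
           ((\<lambda>t. x (t - 1)) has_real_derivative a1 * x0 (t - 2) + u (t - 1)) (at t within {1..T})"
proof -
  show "abs_cont_on {1..T} (\<lambda>t. x (t - 1))"
    by (rule abs_cont_on_reparam[OF is_solutionD(4)[OF sol]]) auto
  have "L2_on {-1 - -2..0 - -2} (\<lambda>t. x0 (t + -2))" "L2_on {0 - -1..T - -1} (\<lambda>t. u (t + -1))"
    using L2_on_shift[OF assms(2)] L2_on_shift[OF assms(3)] by blast+
  then have "L2_on {1..T} (\<lambda>t. x0 (t - 2))" "L2_on {1..T} (\<lambda>t. u (t - 1))"
    using \<open>T \<le> 2\<close> by (auto elim!: L2_on_subset)
  then show "L2_on {1..T} (\<lambda>t. a1 * x0 (t - 2) + u (t - 1))"
    by (intro L2_on_cmult L2_on_add)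
  obtain N where "negligible N"
    and D: "\<And>t. 0 < t \<Longrightarrow> t < T \<Longrightarrow> t \<notin> N \<Longrightarrow> (x has_real_derivative a1 * x (t - 1) + u t) (at t)"
    using is_solution_DERIV[OF sol] by blast
  show "AE t in lebesgue_on {1..T}.
          ((\<lambda>t. x (t - 1)) has_real_derivative a1 * x0 (t - 2) + u (t - 1)) (at t within {1..T})"
  proof (rule AE_lebesgue_onI[where N = "{t. t + -1 \<in> N} \<union> {1, T}"])
    show "negligible ({t. t + -1 \<in> N} \<union> {1, T})"
      using \<open>negligible N\<close> by (intro negligible_Un negligible_translated_preimage) auto
    fix t assume t: "t \<in> {1..T}" "t \<notin> {t. t + -1 \<in> N} \<union> {1, T}"
    then have "(x has_real_derivative a1 * x (t - 1 - 1) + u (t - 1)) (at (t + -1))"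
      using D[of "t - 1"] by simp
    then have "((\<lambda>s. x (s + -1)) has_real_derivative a1 * x (t - 1 - 1) + u (t - 1)) (at t)"
      by (simp only: DERIV_shift)
    moreover have "x (t - 1 - 1) = x0 (t - 2)"
      using is_solutionD(2)[OF sol] t \<open>T \<le> 2\<close> by simp
    ultimately show "((\<lambda>t. x (t - 1)) has_real_derivative a1 * x0 (t - 2) + u (t - 1)) (at t within {1..T})"
      by (simp add: has_field_derivative_at_within)
  qed simp
qed

lemma admissible_imp_W12_tail:
  assumes "a1 \<noteq> 0" "0 < \<epsilon>" "\<epsilon> < 1"
    and x0: "L2_on {-1..0} x0" and u: "u \<in> admissible a1 (1 + \<epsilon>) y x0"
  shows "\<exists>v. W12_repr 1 (1 + \<epsilon>) u v \<and> v (1 + \<epsilon>) = 0"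
proof -
  obtain x where sol: "is_solution a1 (1 + \<epsilon>) y x0 u x" and zero: "\<forall>t\<in>{1 + \<epsilon> - 1..1 + \<epsilon>}. x t = 0"
    using u unfolding admissible_def by blast
  have uL: "L2_on {0..1 + \<epsilon>} u" using u unfolding admissible_def by blast
  have "1 \<le> 1 + \<epsilon>" using \<open>0 < \<epsilon>\<close> by simp
  then obtain N where "negligible N"
    and feedback: "\<And>t. 1 + \<epsilon> - 1 < t \<Longrightarrow> t < 1 + \<epsilon> \<Longrightarrow> t \<notin> N \<Longrightarrow> a1 * x (t - 1) + u t = 0"
    using feedback_law_on_final_interval[OF _ sol zero] by metis
  define v where "v = (\<lambda>t. -a1 * x (t - 1))"
  define w where "w = (\<lambda>t. -a1 * (a1 * x0 (t - 2) + u (t - 1)))"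
  have "1 + \<epsilon> \<le> 2" using \<open>\<epsilon> < 1\<close> by simp
  note delayed = delayed_state_W12[OF this x0 uL sol]
  have "abs_cont_on {1..1 + \<epsilon>} v"
    unfolding v_def using delayed(1) by (rule abs_cont_on_cmult)
  moreover have "AE t in lebesgue_on {1..1 + \<epsilon>}. u t = v t"
  proof (rule AE_lebesgue_onI[where N = "N \<union> {1 + \<epsilon>}"])
    fix t assume "t \<in> {1..1 + \<epsilon>}" "t \<notin> N \<union> {1 + \<epsilon>}"
    then show "u t = v t"
      using feedback[of t] \<open>\<epsilon> < 1\<close> by (simp add: v_def)
  qed (use \<open>negligible N\<close> in auto)
  moreover have "L2_on {1..1 + \<epsilon>} w"
    unfolding w_def using delayed(2) by (rule L2_on_cmult)
  moreover have "AE t in lebesgue_on {1..1 + \<epsilon>}. (v has_real_derivative w t) (at t within {1..1 + \<epsilon>})"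
    using delayed(3) unfolding v_def w_def by eventually_elim (rule DERIV_cmult)
  moreover have "v (1 + \<epsilon>) = 0"
    unfolding v_def using zero \<open>0 < \<epsilon>\<close> by simp
  ultimately show ?thesis
    unfolding W12_repr_def by blast
qed

text \<open>Solving the problem backwards from u: on [0, \<epsilon>] the feedback law u(t + 1) = -a1 x(t) forces
  x(t) = -v(t + 1)/a1, and then x'(t) = a1 x0(t - 1) + u(t) with x' = -w(t + 1)/a1 on (0, \<epsilon>) and
  x' = 0 on (\<epsilon>, 1) forces the initial function below.\<close>
definition steering_initial :: "real \<Rightarrow> real \<Rightarrow> (real \<Rightarrow> real) \<Rightarrow> (real \<Rightarrow> real) \<Rightarrow> real \<Rightarrow> real" where
  "steering_initial a1 \<epsilon> u w s =
     (-1/a1) * u (s + 1) + (-1/a1^2) * (indicator {1..1 + \<epsilon>} (s + 2) * w (s + 2))"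

definition steering_state ::
  "real \<Rightarrow> real \<Rightarrow> (real \<Rightarrow> real) \<Rightarrow> (real \<Rightarrow> real) \<Rightarrow> (real \<Rightarrow> real) \<Rightarrow> real \<Rightarrow> real" where
  "steering_state a1 \<epsilon> u v w t =
     (if t < 0 then steering_initial a1 \<epsilon> u w t else if t \<le> \<epsilon> then (-1/a1) * v (t + 1) else 0)"

lemma L2_on_steering_initial:
  assumes "0 < \<epsilon>" "\<epsilon> \<le> 1" "L2_on {0..1 + \<epsilon>} u" "L2_on {1..1 + \<epsilon>} w"
  shows "L2_on {-1..0} (steering_initial a1 \<epsilon> u w)"
proof -
  have "L2_on {0..1} u"
    by (rule L2_on_subset[OF assms(3)]) (use assms(1) in auto)
  then have "L2_on {0 - 1..1 - 1} (\<lambda>s. u (s + 1))"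
    by (rule L2_on_shift)
  moreover have "L2_on {1..2} (\<lambda>t. indicator {1..1 + \<epsilon>} t * w t)"
  proof -
    have "min 2 (1 + \<epsilon>) = 1 + \<epsilon>"
      using assms(2) by simp
    then show ?thesis
      using assms(4)
      by (simp add: L2_on_iff_indicator mult.assoc[symmetric] indicator_inter_arith[symmetric])
  qed
  then have "L2_on {1 - 2..2 - 2} (\<lambda>s. indicator {1..1 + \<epsilon>} (s + 2) * w (s + 2))"
    by (rule L2_on_shift)
  ultimately show ?thesis
    unfolding steering_initial_def by (intro L2_on_add L2_on_cmult) simp_all
qed

lemma steering_state_vanishes:
  assumes "v (1 + \<epsilon>) = 0" "t \<in> {\<epsilon>..1 + \<epsilon>}" "0 < \<epsilon>"
  shows "steering_state a1 \<epsilon> u v w t = 0"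
  using assms by (auto simp: steering_state_def add.commute)

lemma abs_cont_on_steering_state:
  assumes "0 < \<epsilon>" "abs_cont_on {1..1 + \<epsilon>} v" "v (1 + \<epsilon>) = 0"
  shows "abs_cont_on {0..1 + \<epsilon>} (steering_state a1 \<epsilon> u v w)"
proof -
  have "abs_cont_on {0..1 + \<epsilon>} (\<lambda>t. v (min t \<epsilon> + 1))"
    by (rule abs_cont_on_reparam[OF assms(2)]) (use assms(1) in \<open>auto simp: min_def\<close>)
  then have "abs_cont_on {0..1 + \<epsilon>} (\<lambda>t. (-1/a1) * v (min t \<epsilon> + 1))"
    by (rule abs_cont_on_cmult)
  then show ?thesis
    by (rule abs_cont_on_cong)
      (use assms in \<open>auto simp: steering_state_def min_def add.commute\<close>)
qed

lemma steering_state_DERIV_early: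
  assumes "a1 \<noteq> 0" "\<epsilon> < 1" "0 < t" "t < \<epsilon>"
    and "(v has_real_derivative w (t + 1)) (at (t + 1) within {1..1 + \<epsilon>})"
  shows "(steering_state a1 \<epsilon> u v w has_real_derivative
           a1 * steering_state a1 \<epsilon> u v w (t - 1) + u t) (at t)"
proof -
  have "at (t + 1) within {1..1 + \<epsilon>} = at (t + 1)"
    by (rule at_within_interior) (use assms in simp)
  with assms(5) have "((\<lambda>s. v (s + 1)) has_real_derivative w (t + 1)) (at t)"
    by (simp add: DERIV_shift)
  then have "((\<lambda>s. (-1/a1) * v (s + 1)) has_real_derivative (-1/a1) * w (t + 1)) (at t)"
    by (rule DERIV_cmult)
  then have "(steering_state a1 \<epsilon> u v w has_real_derivative (-1/a1) * w (t + 1)) (at t)"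
    by (rule has_field_derivative_transform_within_open[of _ _ _ "{0<..<\<epsilon>}"])
      (use assms in \<open>auto simp: steering_state_def\<close>)
  moreover have "a1 * steering_state a1 \<epsilon> u v w (t - 1) + u t = (-1/a1) * w (t + 1)"
    using assms by (simp add: steering_state_def steering_initial_def field_simps power2_eq_square)
  ultimately show ?thesis by simp
qed

lemma steering_state_DERIV_late:
  assumes "a1 \<noteq> 0" "\<epsilon> < 1" "0 < \<epsilon>" "\<epsilon> < t" "t < 1 + \<epsilon>" "t \<noteq> 1"
    and "1 < t \<Longrightarrow> u t = v t" "v (1 + \<epsilon>) = 0"
  shows "(steering_state a1 \<epsilon> u v w has_real_derivative
           a1 * steering_state a1 \<epsilon> u v w (t - 1) + u t) (at t)"
proof -
  have "(steering_state a1 \<epsilon> u v w has_real_derivative 0) (at t)"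
    by (rule DERIV_vanishing_on_interval[of \<epsilon> "1 + \<epsilon>"])
      (use assms steering_state_vanishes in auto)
  moreover have "a1 * steering_state a1 \<epsilon> u v w (t - 1) + u t = 0"
    using assms by (cases "t < 1") (auto simp: steering_state_def steering_initial_def indicator_def)
  ultimately show ?thesis by simp
qed

lemma is_solution_steering_state:
  assumes "a1 \<noteq> 0" "0 < \<epsilon>" "\<epsilon> < 1" "abs_cont_on {1..1 + \<epsilon>} v" "v (1 + \<epsilon>) = 0"
    and ae_eq: "AE t in lebesgue_on {1..1 + \<epsilon>}. u t = v t"
    and ae_deriv: "AE t in lebesgue_on {1..1 + \<epsilon>}. (v has_real_derivative w t) (at t within {1..1 + \<epsilon>})"
  shows "is_solution a1 (1 + \<epsilon>) (steering_state a1 \<epsilon> u v w 0) (steering_initial a1 \<epsilon> u w) u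
           (steering_state a1 \<epsilon> u v w)"
proof -
  define x where "x = steering_state a1 \<epsilon> u v w"
  obtain Nd where "negligible Nd" and Nd:
    "\<And>t. t \<in> {1..1 + \<epsilon>} \<Longrightarrow> t \<notin> Nd \<Longrightarrow> (v has_real_derivative w t) (at t within {1..1 + \<epsilon>})"
    by (rule AE_lebesgue_onE[OF _ ae_deriv]) auto
  obtain Nu where "negligible Nu" and Nu: "\<And>t. t \<in> {1..1 + \<epsilon>} \<Longrightarrow> t \<notin> Nu \<Longrightarrow> u t = v t"
    by (rule AE_lebesgue_onE[OF _ ae_eq]) auto
  have ac: "abs_cont_on {0..1 + \<epsilon>} x"
    unfolding x_def using assms(2,4,5) by (rule abs_cont_on_steering_state)
  moreover have "\<forall>t\<in>{-1..<0}. x t = steering_initial a1 \<epsilon> u w t"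
    by (simp add: x_def steering_state_def)
  moreover note abs_cont_on_imp_continuous_on[OF ac]
  moreover have "AE t in lebesgue_on {0..1 + \<epsilon>}. (x has_real_derivative a1 * x (t - 1) + u t) (at t within {0..1 + \<epsilon>})"
  proof (rule AE_lebesgue_onI[where N = "{t. t + 1 \<in> Nd} \<union> Nu \<union> {0, \<epsilon>, 1, 1 + \<epsilon>}"])
    show "negligible ({t. t + 1 \<in> Nd} \<union> Nu \<union> {0, \<epsilon>, 1, 1 + \<epsilon>})"
      using \<open>negligible Nd\<close> \<open>negligible Nu\<close> by (intro negligible_Un negligible_translated_preimage) auto
    fix t assume t: "t \<in> {0..1 + \<epsilon>}" "t \<notin> {t. t + 1 \<in> Nd} \<union> Nu \<union> {0, \<epsilon>, 1, 1 + \<epsilon>}"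
    have "(x has_real_derivative a1 * x (t - 1) + u t) (at t)"
    proof (cases "t < \<epsilon>")
      case True
      then show ?thesis
        unfolding x_def using assms t Nd[of "t + 1"] by (intro steering_state_DERIV_early) auto
    next
      case False
      then show ?thesis
        unfolding x_def using assms t Nu[of t] by (intro steering_state_DERIV_late) auto
    qed
    then show "(x has_real_derivative a1 * x (t - 1) + u t) (at t within {0..1 + \<epsilon>})"
      by (rule has_field_derivative_at_within)
  qed simp
  ultimately show ?thesis
    unfolding is_solution_def x_def by blast
qed

lemma W12_tail_imp_admissible:
  assumes "a1 \<noteq> 0" "0 < \<epsilon>" "\<epsilon> < 1"
    and uL: "L2_on {0..1 + \<epsilon>} u" and W: "W12_repr 1 (1 + \<epsilon>) u v" and v_end: "v (1 + \<epsilon>) = 0"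
  shows "\<exists>y x0. L2_on {-1..0} x0 \<and> u \<in> admissible a1 (1 + \<epsilon>) y x0"
proof -
  obtain w where "L2_on {1..1 + \<epsilon>} w"
    and "AE t in lebesgue_on {1..1 + \<epsilon>}. (v has_real_derivative w t) (at t within {1..1 + \<epsilon>})"
    using W unfolding W12_repr_def by blast
  moreover have "abs_cont_on {1..1 + \<epsilon>} v" "AE t in lebesgue_on {1..1 + \<epsilon>}. u t = v t"
    using W unfolding W12_repr_def by blast+
  ultimately have "is_solution a1 (1 + \<epsilon>) (steering_state a1 \<epsilon> u v w 0) (steering_initial a1 \<epsilon> u w) u
      (steering_state a1 \<epsilon> u v w)"
    and "L2_on {-1..0} (steering_initial a1 \<epsilon> u w)"
    using assms by (auto intro: is_solution_steering_state L2_on_steering_initial)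
  moreover have "\<forall>t\<in>{1 + \<epsilon> - 1..1 + \<epsilon>}. steering_state a1 \<epsilon> u v w t = 0"
    using v_end assms(2) by (auto intro: steering_state_vanishes)
  ultimately show ?thesis
    using uL unfolding admissible_def by blast
qed

theorem mainTheorem2:
  fixes a1 \<epsilon> :: real
  assumes "a1 \<noteq> 0" and "0 < \<epsilon>" and "\<epsilon> < 1"
  shows "(\<forall>y x0 y' x0' u.
            L2_on {-1..0} x0 \<and> L2_on {-1..0} x0' \<and>
            u \<in> admissible a1 (1 + \<epsilon>) y x0 \<and> u \<in> admissible a1 (1 + \<epsilon>) y' x0'
            \<longrightarrow> y = y' \<and> (AE s in lebesgue_on {-1..0}. x0 s = x0' s))
       \<and> (\<forall>u. L2_on {0..1 + \<epsilon>} u \<longrightarrow>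
            ((\<exists>y x0. L2_on {-1..0} x0 \<and> u \<in> admissible a1 (1 + \<epsilon>) y x0) \<longleftrightarrow>
             (\<exists>v. W12_repr 1 (1 + \<epsilon>) u v \<and> v (1 + \<epsilon>) = 0)))"
proof (rule conjI; intro allI impI)
  fix y x0 y' x0' u
  assume "L2_on {-1..0} x0 \<and> L2_on {-1..0} x0' \<and>
    u \<in> admissible a1 (1 + \<epsilon>) y x0 \<and> u \<in> admissible a1 (1 + \<epsilon>) y' x0'"
  then show "y = y' \<and> (AE s in lebesgue_on {-1..0}. x0 s = x0' s)"
    using admissible_initial_data_unique[OF assms] by blast
next
  fix u
  assume "L2_on {0..1 + \<epsilon>} u"
  then show "(\<exists>y x0. L2_on {-1..0} x0 \<and> u \<in> admissible a1 (1 + \<epsilon>) y x0) \<longleftrightarrow>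
    (\<exists>v. W12_repr 1 (1 + \<epsilon>) u v \<and> v (1 + \<epsilon>) = 0)"
    using admissible_imp_W12_tail[OF assms] W12_tail_imp_admissible[OF assms] by blast
qed

end
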